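(* Let $(Y,X,W_1,W_2)$ with $W_1\in\mathbb R^{d_1}$, $W_2\in\mathbb R^{d_2}$ ($d_2\ge1$) have finite second moments, and suppose the joint distribution of $(Y,X,W_1)$ is known. Suppose (A1) $\operatorname{var}(Y,X,W_1,W_2)$ is positive definite and $\pi_2=0$. Then (i) $\beta_{\text{long}}=\beta_{\text{med}}$, and (ii) the identified set for $\gamma_1$ is $\mathbb R^{d_1}$: for every $g_1\in\mathbb R^{d_1}$ there exists a random vector $(\tilde Y,\tilde X,\tilde W_1,\tilde W_2)$ with $(\tilde Y,\tilde X,\tilde W_1)\overset{d}{=}(Y,X,W_1)$, satisfying (A1) and $\pi_2=0$, whose long-regression coefficient on $\tilde W_1$ equals $g_1$.
   Context: $\beta_{\text{long}},\gamma_1,\gamma_2$ are the coefficients on $X,W_1,W_2$ in the linear projection of $Y$ on $(1,X,W_1,W_2)$; $\pi_1,\pi_2$ are the coefficients on $W_1,W_2$ in the linear projection of $X$ on $(1,W_1,W_2)$; $\beta_{\text{med}}$ is the coefficient on $X$ in the linear projection of $Y$ on $(1,X,W_1)$. *)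

theory Defs
  imports "HOL-Probability.Probability"
begin

definition ExpM :: "'a measure \<Rightarrow> ('a \<Rightarrow> real) \<Rightarrow> real" where
  "ExpM M f = integral\<^sup>L M f"

definition cov :: "'a measure \<Rightarrow> ('a \<Rightarrow> real) \<Rightarrow> ('a \<Rightarrow> real) \<Rightarrow> real" where
  "cov M f g = ExpM M (\<lambda>\<omega>. (f \<omega> - ExpM M f) * (g \<omega> - ExpM M g))"

definition var_pos_def :: "'a measure \<Rightarrow> ('a \<Rightarrow> 'v::euclidean_space) \<Rightarrow> bool" where
  "var_pos_def M Z \<longleftrightarrow>
     (\<forall>t::'v. t \<noteq> 0 \<longrightarrow>
        (\<Sum>i\<in>Basis. \<Sum>j\<in>Basis. (t \<bullet> i) * (t \<bullet> j) *
            cov M (\<lambda>\<omega>. Z \<omega> \<bullet> i) (\<lambda>\<omega>. Z \<omega> \<bullet> j)) > 0)"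

definition lin_proj :: "'a measure \<Rightarrow> ('a \<Rightarrow> real) \<Rightarrow> ('a \<Rightarrow> 'v::euclidean_space) \<Rightarrow> real \<times> 'v" where
  "lin_proj M Y R = (THE (c, b). \<forall>c' b'.
      ExpM M (\<lambda>\<omega>. (Y \<omega> - c - b \<bullet> R \<omega>)\<^sup>2) \<le> ExpM M (\<lambda>\<omega>. (Y \<omega> - c' - b' \<bullet> R \<omega>)\<^sup>2))"

definition second_moments ::
  "'a measure \<Rightarrow> ('a \<Rightarrow> real) \<Rightarrow> ('a \<Rightarrow> real) \<Rightarrow> ('a \<Rightarrow> real^'d1) \<Rightarrow> ('a \<Rightarrow> real^'d2) \<Rightarrow> bool" where
  "second_moments M Y X W1 W2 \<longleftrightarrow>
     Y \<in> borel_measurable M \<and> X \<in> borel_measurable M \<and>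
     W1 \<in> borel_measurable M \<and> W2 \<in> borel_measurable M \<and>
     integrable M (\<lambda>\<omega>. (Y \<omega>)\<^sup>2) \<and> integrable M (\<lambda>\<omega>. (X \<omega>)\<^sup>2) \<and>
     integrable M (\<lambda>\<omega>. (norm (W1 \<omega>))\<^sup>2) \<and> integrable M (\<lambda>\<omega>. (norm (W2 \<omega>))\<^sup>2)"

definition A1_pd ::
  "'a measure \<Rightarrow> ('a \<Rightarrow> real) \<Rightarrow> ('a \<Rightarrow> real) \<Rightarrow> ('a \<Rightarrow> real^'d1) \<Rightarrow> ('a \<Rightarrow> real^'d2) \<Rightarrow> bool" where
  "A1_pd M Y X W1 W2 \<longleftrightarrow> var_pos_def M (\<lambda>\<omega>. (Y \<omega>, X \<omega>, W1 \<omega>, W2 \<omega>))"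

definition long_proj where
  "long_proj M Y X W1 W2 = lin_proj M Y (\<lambda>\<omega>. (X \<omega>, W1 \<omega>, W2 \<omega>))"

definition beta_long ::
  "'a measure \<Rightarrow> ('a \<Rightarrow> real) \<Rightarrow> ('a \<Rightarrow> real) \<Rightarrow> ('a \<Rightarrow> real^'d1) \<Rightarrow> ('a \<Rightarrow> real^'d2) \<Rightarrow> real" where
  "beta_long M Y X W1 W2 = fst (snd (long_proj M Y X W1 W2))"

definition gamma1 ::
  "'a measure \<Rightarrow> ('a \<Rightarrow> real) \<Rightarrow> ('a \<Rightarrow> real) \<Rightarrow> ('a \<Rightarrow> real^'d1) \<Rightarrow> ('a \<Rightarrow> real^'d2) \<Rightarrow> real^'d1" where
  "gamma1 M Y X W1 W2 = fst (snd (snd (long_proj M Y X W1 W2)))"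

definition pi2 ::
  "'a measure \<Rightarrow> ('a \<Rightarrow> real) \<Rightarrow> ('a \<Rightarrow> real^'d1) \<Rightarrow> ('a \<Rightarrow> real^'d2) \<Rightarrow> real^'d2" where
  "pi2 M X W1 W2 = snd (snd (lin_proj M X (\<lambda>\<omega>. (W1 \<omega>, W2 \<omega>))))"

definition beta_med ::
  "'a measure \<Rightarrow> ('a \<Rightarrow> real) \<Rightarrow> ('a \<Rightarrow> real) \<Rightarrow> ('a \<Rightarrow> real^'d1) \<Rightarrow> real" where
  "beta_med M Y X W1 = fst (snd (lin_proj M Y (\<lambda>\<omega>. (X \<omega>, W1 \<omega>))))"

end

theory Submission
  imports Defs
begin

(*
  Everything in the statement depends on (Y, X, W1, W2) only through first and second
  moments, and a linear projection is characterised by its residual being orthogonal to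
  every affine function of the regressors.

  (i) Let Xt be the residual of X on (1, W1). Since pi2 = 0 it is also the residual of X on
  (1, W1, W2), and multiplying either regression of Y by Xt gives
  E[Y Xt] = beta_med E[X Xt] = beta_long E[X Xt], where E[X Xt] = E[Xt^2] > 0.

  (ii) Write Y = c + beta X + gamma'W1 + u for the regression on (1, X, W1). Given g1, pick a
  basis vector e, put V = u/2 + (gamma - g1)'W1 and replace W2 by V e + eta xi, where xi is
  independent of everything and uniform on {+-e_i}. The long residual with coefficients
  (beta, g1, e) is then u/2 - eta e'xi; it is orthogonal to 1, X and W1, and to the new W2
  exactly when eta^2 = d2 E[u^2]/4. The noise makes the variance positive definite, and
  pi2 stays 0 because the residual of X on W1 is orthogonal to u and W1.
*)

definition square_integrable :: "'a measure \<Rightarrow> ('a \<Rightarrow> 'v::euclidean_space) \<Rightarrow> bool" where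
  "square_integrable M Z \<longleftrightarrow> Z \<in> borel_measurable M \<and> integrable M (\<lambda>x. (norm (Z x))\<^sup>2)"

lemma square_integrable_real_iff:
  "square_integrable M (f :: 'a \<Rightarrow> real) \<longleftrightarrow> f \<in> borel_measurable M \<and> integrable M (\<lambda>x. (f x)\<^sup>2)"
  by (simp add: square_integrable_def)

lemma second_moments_iff:
  "second_moments M Y X W1 W2 \<longleftrightarrow> square_integrable M Y \<and> square_integrable M X
     \<and> square_integrable M W1 \<and> square_integrable M W2"
  by (auto simp: second_moments_def square_integrable_def)

lemma integrable_of_abs_le:
  fixes f g :: "'a \<Rightarrow> real"
  assumes "integrable M f" "g \<in> borel_measurable M" "\<And>x. \<bar>g x\<bar> \<le> f x"
  shows "integrable M g"
proof (rule Bochner_Integration.integrable_bound[OF assms(1)])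
  show "AE x in M. norm (g x) \<le> norm (f x)"
    using assms(3) by (intro AE_I2) (smt (verit) real_norm_def)
qed (use assms(2) in simp)

lemma square_integrable_bounded_linear:
  assumes Z: "square_integrable M Z" and f: "bounded_linear f"
  shows "square_integrable M (\<lambda>x. f (Z x))"
proof -
  have [measurable]: "Z \<in> borel_measurable M" and int: "integrable M (\<lambda>x. (norm (Z x))\<^sup>2)"
    using Z by (auto simp: square_integrable_def)
  obtain K where K: "\<And>v. norm (f v) \<le> norm v * K"
    using bounded_linear.bounded[OF f] by blast
  have [measurable]: "f \<in> borel_measurable borel"
    by (intro borel_measurable_continuous_onI linear_continuous_on f)
  have bound: "\<bar>(norm (f (Z x)))\<^sup>2\<bar> \<le> K\<^sup>2 * (norm (Z x))\<^sup>2" for x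
    using K[of "Z x"] by (simp add: power_mult_distrib[symmetric] mult.commute power_mono)
  have "integrable M (\<lambda>x. (norm (f (Z x)))\<^sup>2)"
    by (rule integrable_of_abs_le[OF integrable_mult_right[OF int] _ bound]) measurable
  then show ?thesis
    by (simp add: square_integrable_def)
qed

lemma square_integrable_add:
  assumes Z: "square_integrable M Z" and W: "square_integrable M W"
  shows "square_integrable M (\<lambda>x. Z x + W x)"
proof -
  have [measurable]: "Z \<in> borel_measurable M" "W \<in> borel_measurable M"
    using Z W by (auto simp: square_integrable_def)
  have bound: "\<bar>(norm (Z x + W x))\<^sup>2\<bar> \<le> 2 * (norm (Z x))\<^sup>2 + 2 * (norm (W x))\<^sup>2" for x
  proof -
    have "(norm (Z x + W x))\<^sup>2 \<le> (norm (Z x) + norm (W x))\<^sup>2"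
      by (intro power_mono norm_triangle_ineq) simp
    also have "\<dots> \<le> 2 * (norm (Z x))\<^sup>2 + 2 * (norm (W x))\<^sup>2"
      using sum_squares_bound[of "norm (Z x)" "norm (W x)"] by (simp add: power2_eq_square algebra_simps)
    finally show ?thesis
      by simp
  qed
  have "integrable M (\<lambda>x. 2 * (norm (Z x))\<^sup>2 + 2 * (norm (W x))\<^sup>2)"
    using Z W by (simp add: square_integrable_def)
  then have "integrable M (\<lambda>x. (norm (Z x + W x))\<^sup>2)"
    by (rule integrable_of_abs_le[OF _ _ bound]) measurable
  then show ?thesis
    by (simp add: square_integrable_def)
qed

lemma square_integrable_diff:
  "square_integrable M Z \<Longrightarrow> square_integrable M W \<Longrightarrow> square_integrable M (\<lambda>x. Z x - W x)"
  using square_integrable_add[of M Z "\<lambda>x. - W x"]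
    square_integrable_bounded_linear[of M W uminus, OF _ bounded_linear_minus[OF bounded_linear_ident]]
  by simp

lemma square_integrable_inner:
  "square_integrable M Z \<Longrightarrow> square_integrable M (\<lambda>x. t \<bullet> Z x)"
  by (rule square_integrable_bounded_linear[OF _ bounded_linear_inner_right])

lemma square_integrable_scaleR_left:
  "square_integrable M f \<Longrightarrow> square_integrable M (\<lambda>x. f x *\<^sub>R v)"
  by (rule square_integrable_bounded_linear[OF _ bounded_linear_scaleR_left])

lemma square_integrable_mult_left:
  "square_integrable M (f :: _ \<Rightarrow> real) \<Longrightarrow> square_integrable M (\<lambda>x. c * f x)"
  by (rule square_integrable_bounded_linear[OF _ bounded_linear_mult_right])

lemma square_integrable_Pair_iff:
  "square_integrable M (\<lambda>x. (Z x, W x)) \<longleftrightarrow> square_integrable M Z \<and> square_integrable M W"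
proof
  assume ZW: "square_integrable M (\<lambda>x. (Z x, W x))"
  show "square_integrable M Z \<and> square_integrable M W"
    using square_integrable_bounded_linear[OF ZW bounded_linear_fst]
      square_integrable_bounded_linear[OF ZW bounded_linear_snd] by (simp only: fst_conv snd_conv)
next
  assume "square_integrable M Z \<and> square_integrable M W"
  moreover have "(norm (Z x, W x))\<^sup>2 = (norm (Z x))\<^sup>2 + (norm (W x))\<^sup>2" for x
    by (simp add: norm_Pair)
  ultimately show "square_integrable M (\<lambda>x. (Z x, W x))"
    unfolding square_integrable_def by (simp add: borel_measurable_Pair)
qed

lemma square_integrable_PairI:
  "square_integrable M Z \<Longrightarrow> square_integrable M W \<Longrightarrow> square_integrable M (\<lambda>x. (Z x, W x))"
  by (simp add: square_integrable_Pair_iff)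

lemma square_integrable_BasisI:
  assumes "Z \<in> borel_measurable M" and "\<And>i. i \<in> Basis \<Longrightarrow> integrable M (\<lambda>x. (Z x \<bullet> i)\<^sup>2)"
  shows "square_integrable M Z"
proof -
  have "(norm (Z x))\<^sup>2 = (\<Sum>i\<in>Basis. (Z x \<bullet> i)\<^sup>2)" for x
    by (simp add: norm_eq_sqrt_inner euclidean_inner[of "Z x" "Z x"] power2_eq_square sum_nonneg)
  then show ?thesis
    using assms by (simp add: square_integrable_def)
qed

lemma integrable_mult_square_integrable:
  fixes f g :: "'a \<Rightarrow> real"
  assumes f: "square_integrable M f" and g: "square_integrable M g"
  shows "integrable M (\<lambda>x. f x * g x)"
proof -
  have [measurable]: "f \<in> borel_measurable M" "g \<in> borel_measurable M"
    using f g by (auto simp: square_integrable_def)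
  have bound: "\<bar>f x * g x\<bar> \<le> (f x)\<^sup>2 + (g x)\<^sup>2" for x
  proof -
    have "0 \<le> \<bar>f x\<bar> * \<bar>g x\<bar>" "2 * \<bar>f x\<bar> * \<bar>g x\<bar> \<le> (f x)\<^sup>2 + (g x)\<^sup>2"
      using sum_squares_bound[of "\<bar>f x\<bar>" "\<bar>g x\<bar>"] by simp_all
    then show ?thesis
      unfolding abs_mult by linarith
  qed
  have "integrable M (\<lambda>x. (f x)\<^sup>2 + (g x)\<^sup>2)"
    using f g by (simp add: square_integrable_real_iff)
  then show ?thesis
    by (rule integrable_of_abs_le[OF _ _ bound]) measurable
qed

lemma (in finite_measure) square_integrable_const: "square_integrable M (\<lambda>x. c)"
  by (simp add: square_integrable_def)

lemma (in finite_measure) integrable_square_integrable: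
  "square_integrable M (f :: 'a \<Rightarrow> real) \<Longrightarrow> integrable M f"
  by (simp add: square_integrable_real_iff square_integrable_imp_integrable)

context prob_space
begin

lemma square_integrable_sub_const:
  "square_integrable M Z \<Longrightarrow> square_integrable M (\<lambda>x. Z x - c)"
  by (intro square_integrable_diff square_integrable_const)

lemma variance_add_const: "integrable M f \<Longrightarrow> variance (\<lambda>x. f x + c) = variance (f :: 'a \<Rightarrow> real)"
  by (simp add: prob_space lebesgue_integral_const)

lemma cov_commute: "cov M f g = cov M g f"
  by (simp add: cov_def mult.commute)

lemma cov_self: "cov M f f = variance f"
  by (simp add: cov_def ExpM_def power2_eq_square)

lemma cov_cmult_left: "cov M (\<lambda>x. c * f x) g = c * cov M f g"
  by (simp add: cov_def ExpM_def mult.assoc right_diff_distrib[symmetric])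

lemma cov_minus_left: "cov M (\<lambda>x. - f x) g = - cov M f g"
  using cov_cmult_left[of "- 1" f g] by simp

lemma cov_add_left:
  assumes f: "square_integrable M f" and g: "square_integrable M g" and h: "square_integrable M h"
  shows "cov M (\<lambda>x. f x + g x) h = cov M f h + cov M g h"
proof -
  have "(f x + g x - (expectation f + expectation g)) * (h x - expectation h)
      = (f x - expectation f) * (h x - expectation h) + (g x - expectation g) * (h x - expectation h)" for x
    by (simp add: algebra_simps)
  then show ?thesis
    using f g h
    by (simp add: cov_def ExpM_def integrable_square_integrable integrable_mult_square_integrable
        square_integrable_sub_const)
qed

lemma cov_diff_left:
  assumes f: "square_integrable M f" and g: "square_integrable M g" and h: "square_integrable M h"
  shows "cov M (\<lambda>x. f x - g x) h = cov M f h - cov M g h"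
  using cov_add_left[OF f square_integrable_mult_left[OF g, of "- 1"] h] by (simp add: cov_minus_left)

lemma cov_add_const_left:
  "integrable M f \<Longrightarrow> cov M (\<lambda>x. f x + c) g = cov M f g"
  by (simp add: cov_def ExpM_def prob_space)

lemma linear_cov_inner_left:
  assumes Z: "square_integrable M Z" and g: "square_integrable M g"
  shows "linear (\<lambda>s. cov M (\<lambda>x. s \<bullet> Z x) g)"
proof (rule linearI)
  show "cov M (\<lambda>x. (s + u) \<bullet> Z x) g = cov M (\<lambda>x. s \<bullet> Z x) g + cov M (\<lambda>x. u \<bullet> Z x) g" for s u
    by (simp add: inner_add_left cov_add_left square_integrable_inner Z g)
  show "cov M (\<lambda>x. (r *\<^sub>R s) \<bullet> Z x) g = r *\<^sub>R cov M (\<lambda>x. s \<bullet> Z x) g" for r s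
    by (simp add: cov_cmult_left)
qed

lemma bilinear_cov_inner:
  assumes Z: "square_integrable M Z" and W: "square_integrable M W"
  shows "bilinear (\<lambda>s t. cov M (\<lambda>x. s \<bullet> Z x) (\<lambda>x. t \<bullet> W x))"
proof -
  have "linear (\<lambda>t. cov M (\<lambda>x. s \<bullet> Z x) (\<lambda>x. t \<bullet> W x))" for s
    using linear_cov_inner_left[OF W square_integrable_inner[OF Z, of s]]
    by (simp add: cov_commute[of _ "\<lambda>x. s \<bullet> Z x"])
  then show ?thesis
    using linear_cov_inner_left[OF Z square_integrable_inner[OF W]] by (simp add: bilinear_def)
qed

lemma var_pos_def_iff:
  assumes Z: "square_integrable M Z"
  shows "var_pos_def M Z \<longleftrightarrow> (\<forall>t. t \<noteq> 0 \<longrightarrow> variance (\<lambda>x. t \<bullet> Z x) > 0)"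
proof -
  define B where "B s t = cov M (\<lambda>x. s \<bullet> Z x) (\<lambda>x. t \<bullet> Z x)" for s t :: 'b
  have "bilinear B"
    unfolding B_def by (rule bilinear_cov_inner[OF Z Z])
  have "variance (\<lambda>x. t \<bullet> Z x) = B t t" for t
    by (simp add: B_def cov_self)
  also have "B t t = B (\<Sum>i\<in>Basis. (t \<bullet> i) *\<^sub>R i) (\<Sum>j\<in>Basis. (t \<bullet> j) *\<^sub>R j)" for t
    by (simp add: euclidean_representation)
  also have "\<dots> t = (\<Sum>(i, j)\<in>Basis \<times> Basis. (t \<bullet> i) * (t \<bullet> j) * B i j)" for t
    by (simp add: bilinear_sum[OF \<open>bilinear B\<close>] bilinear_lmul[OF \<open>bilinear B\<close>]
        bilinear_rmul[OF \<open>bilinear B\<close>] split_def mult_ac)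
  also have "\<dots> t = (\<Sum>i\<in>Basis. \<Sum>j\<in>Basis. (t \<bullet> i) * (t \<bullet> j) * cov M (\<lambda>x. Z x \<bullet> i) (\<lambda>x. Z x \<bullet> j))" for t
    by (simp add: sum.cartesian_product B_def inner_commute)
  finally show ?thesis
    by (simp add: var_pos_def_def)
qed

end

lemma bilinear_pos_def_represents:
  fixes B :: "'v::euclidean_space \<Rightarrow> 'v \<Rightarrow> real"
  assumes B: "bilinear B" and pos: "\<And>x. x \<noteq> 0 \<Longrightarrow> B x x > 0" and lin: "linear l"
  shows "\<exists>b. \<forall>t. B b t = l t"
proof -
  define A where "A b = (\<Sum>i\<in>Basis. B b i *\<^sub>R i)" for b
  have linear_right: "linear (B b)" for b
    using B by (simp add: bilinear_def)
  have inner_A: "t \<bullet> A b = B b t" for b t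
    using Linear_Algebra.linear_componentwise[OF linear_right, where x=t and j=1]
    by (simp add: A_def inner_sum_right mult.commute)
  have "linear A"
    using B unfolding A_def
    by (intro linearI) (simp_all add: bilinear_ladd bilinear_lmul scaleR_add_left sum.distrib scaleR_sum_right)
  moreover have "inj A"
  proof (rule linear_injective_0[OF \<open>linear A\<close>, THEN iffD2], intro allI impI)
    fix x assume "A x = 0"
    then have "B x x = 0"
      using inner_A[of x x] by simp
    then show "x = 0"
      using pos by force
  qed
  ultimately obtain b where b: "A b = (\<Sum>i\<in>Basis. l i *\<^sub>R i)"
    by (metis linear_injective_imp_surjective surjD)
  have "B b t = l t" for t
    using inner_A[of t b] Linear_Algebra.linear_componentwise[OF lin, where x=t and j=1]
    by (simp add: b inner_sum_right mult.commute)
  then show ?thesis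
    by blast
qed

definition orth_affine :: "'a measure \<Rightarrow> ('a \<Rightarrow> real) \<Rightarrow> ('a \<Rightarrow> 'v::euclidean_space) \<Rightarrow> bool" where
  "orth_affine M e R \<longleftrightarrow> (\<forall>a t. ExpM M (\<lambda>x. e x * (a + t \<bullet> R x)) = 0)"

lemma orth_affine_PairD1:
  assumes "orth_affine M e (\<lambda>x. (A x, B x))"
  shows "orth_affine M e A"
  unfolding orth_affine_def
proof (intro allI)
  fix a t
  show "ExpM M (\<lambda>x. e x * (a + t \<bullet> A x)) = 0"
    using assms[unfolded orth_affine_def, rule_format, of a "(t, 0)"] by simp
qed

context prob_space
begin

lemma orth_affine_mult_affine:
  "orth_affine M e R \<Longrightarrow> expectation (\<lambda>x. e x * (a + t \<bullet> R x)) = 0"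
  by (simp add: orth_affine_def ExpM_def)

lemma expectation_mult_eq_cov:
  assumes f: "square_integrable M f" and g: "square_integrable M g"
  shows "expectation (\<lambda>x. f x * g x) = cov M f g + expectation f * expectation g"
proof -
  have "(f x - expectation f) * (g x - expectation g)
      = f x * g x - expectation g * f x - expectation f * g x + expectation f * expectation g" for x
    by (simp add: algebra_simps)
  then show ?thesis
    using f g by (simp add: cov_def ExpM_def integrable_square_integrable integrable_mult_square_integrable prob_space)
qed

lemma orth_affineI:
  assumes e: "square_integrable M e" and R: "square_integrable M R"
    and mean: "expectation e = 0" and uncorr: "\<And>t. cov M e (\<lambda>x. t \<bullet> R x) = 0"
  shows "orth_affine M e R"
  unfolding orth_affine_def
proof (intro allI)
  fix a t
  have "cov M (\<lambda>x. a + t \<bullet> R x) e = cov M (\<lambda>x. t \<bullet> R x) e"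
    using cov_add_const_left[of "\<lambda>x. t \<bullet> R x" a e]
    by (simp add: add.commute integrable_square_integrable square_integrable_inner R)
  then show "ExpM M (\<lambda>x. e x * (a + t \<bullet> R x)) = 0"
    using uncorr[of t] mean
    by (simp add: ExpM_def expectation_mult_eq_cov e R square_integrable_add square_integrable_inner
        square_integrable_const cov_commute[of e])
qed

lemma affine_eq_0_of_var_pos_def:
  assumes R: "square_integrable M R" and pd: "var_pos_def M R"
    and zero: "expectation (\<lambda>x. (a + t \<bullet> R x)\<^sup>2) = 0"
  shows "a = 0 \<and> t = 0"
proof -
  have tR: "square_integrable M (\<lambda>x. t \<bullet> R x)"
    by (rule square_integrable_inner[OF R])
  have "variance (\<lambda>x. t \<bullet> R x) = variance (\<lambda>x. a + t \<bullet> R x)"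
    using tR by (simp add: integrable_square_integrable prob_space)
  also have "\<dots> \<le> expectation (\<lambda>x. (a + t \<bullet> R x)\<^sup>2)"
    using square_integrable_add[OF square_integrable_const tR]
    by (simp add: variance_eq integrable_square_integrable square_integrable_real_iff)
  finally have "t = 0"
    using zero pd var_pos_def_iff[OF R] by force
  then show ?thesis
    using zero by (simp add: prob_space)
qed

lemma orth_affine_pythagoras:
  assumes R: "square_integrable M R" and Y: "square_integrable M Y"
    and orth: "orth_affine M (\<lambda>x. Y x - c - b \<bullet> R x) R"
  shows "expectation (\<lambda>x. (Y x - c' - b' \<bullet> R x)\<^sup>2)
    = expectation (\<lambda>x. (Y x - c - b \<bullet> R x)\<^sup>2) + expectation (\<lambda>x. ((c - c') + (b - b') \<bullet> R x)\<^sup>2)"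
proof -
  define e where "e x = Y x - c - b \<bullet> R x" for x
  define d where "d x = (c - c') + (b - b') \<bullet> R x" for x
  have e: "square_integrable M e" and d: "square_integrable M d"
    unfolding e_def d_def
    by (intro square_integrable_diff square_integrable_add square_integrable_inner square_integrable_const R Y)+
  have "(Y x - c' - b' \<bullet> R x)\<^sup>2 = (e x)\<^sup>2 + 2 * (e x * d x) + (d x)\<^sup>2" for x
    by (simp add: e_def d_def power2_eq_square algebra_simps inner_diff_left)
  moreover have "expectation (\<lambda>x. e x * d x) = 0"
    using orth by (simp add: orth_affine_def ExpM_def e_def d_def)
  ultimately show ?thesis
    using e d by (simp add: integrable_mult_square_integrable square_integrable_real_iff flip: e_def d_def)
qed

lemma lin_proj_eqI:
  assumes R: "square_integrable M R" and Y: "square_integrable M Y" and pd: "var_pos_def M R"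
    and orth: "orth_affine M (\<lambda>x. Y x - c - b \<bullet> R x) R"
  shows "lin_proj M Y R = (c, b)"
  unfolding lin_proj_def
proof (rule the_equality)
  note pythagoras = orth_affine_pythagoras[OF R Y orth]
  show "case (c, b) of (c, b) \<Rightarrow> \<forall>c' b'.
      ExpM M (\<lambda>x. (Y x - c - b \<bullet> R x)\<^sup>2) \<le> ExpM M (\<lambda>x. (Y x - c' - b' \<bullet> R x)\<^sup>2)"
  proof (simp only: prod.case, intro allI)
    fix c' b'
    show "ExpM M (\<lambda>x. (Y x - c - b \<bullet> R x)\<^sup>2) \<le> ExpM M (\<lambda>x. (Y x - c' - b' \<bullet> R x)\<^sup>2)"
      unfolding ExpM_def pythagoras[of c' b'] by simp
  qed
  fix p
  assume "case p of (c', b') \<Rightarrow> \<forall>c'' b''.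
      ExpM M (\<lambda>x. (Y x - c' - b' \<bullet> R x)\<^sup>2) \<le> ExpM M (\<lambda>x. (Y x - c'' - b'' \<bullet> R x)\<^sup>2)"
  then have "ExpM M (\<lambda>x. (Y x - fst p - snd p \<bullet> R x)\<^sup>2) \<le> ExpM M (\<lambda>x. (Y x - c - b \<bullet> R x)\<^sup>2)"
    by (auto simp: split_beta)
  then have "expectation (\<lambda>x. ((c - fst p) + (b - snd p) \<bullet> R x)\<^sup>2) \<le> 0"
    unfolding ExpM_def pythagoras[of "fst p" "snd p"] by simp
  moreover have "expectation (\<lambda>x. ((c - fst p) + (b - snd p) \<bullet> R x)\<^sup>2) \<ge> 0"
    by simp
  ultimately have "c - fst p = 0 \<and> b - snd p = 0"
    by (intro affine_eq_0_of_var_pos_def[OF R pd]) simp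
  then show "p = (c, b)"
    by (simp add: prod_eq_iff)
qed

lemma lin_proj_orth_affine:
  assumes R: "square_integrable M R" and Y: "square_integrable M Y" and pd: "var_pos_def M R"
  shows "orth_affine M (\<lambda>x. Y x - fst (lin_proj M Y R) - snd (lin_proj M Y R) \<bullet> R x) R"
proof -
  have bil: "bilinear (\<lambda>s t. cov M (\<lambda>x. s \<bullet> R x) (\<lambda>x. t \<bullet> R x))"
    by (rule bilinear_cov_inner[OF R R])
  have lin: "linear (\<lambda>t. cov M Y (\<lambda>x. t \<bullet> R x))"
    using linear_cov_inner_left[OF R Y] unfolding cov_commute[of Y] .
  have pos: "cov M (\<lambda>x. s \<bullet> R x) (\<lambda>x. s \<bullet> R x) > 0" if "s \<noteq> 0" for s
    using pd that by (simp add: var_pos_def_iff[OF R] cov_self)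
  obtain b where b: "\<And>t. cov M (\<lambda>x. b \<bullet> R x) (\<lambda>x. t \<bullet> R x) = cov M Y (\<lambda>x. t \<bullet> R x)"
    using bilinear_pos_def_represents[OF bil pos lin] by blast
  define c where "c = expectation Y - expectation (\<lambda>x. b \<bullet> R x)"
  have bR: "square_integrable M (\<lambda>x. b \<bullet> R x)"
    by (rule square_integrable_inner[OF R])
  have "cov M (\<lambda>x. Y x - c - b \<bullet> R x) g = cov M Y g - cov M (\<lambda>x. b \<bullet> R x) g"
    if g: "square_integrable M g" for g
    using cov_add_const_left[of "\<lambda>x. Y x - b \<bullet> R x" "- c" g] cov_diff_left[OF Y bR g]
      integrable_square_integrable[OF square_integrable_diff[OF Y bR]]
    by (simp add: algebra_simps)
  then have "orth_affine M (\<lambda>x. Y x - c - b \<bullet> R x) R"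
    using Y bR b
    by (intro orth_affineI R square_integrable_diff square_integrable_const)
       (simp_all add: c_def integrable_square_integrable prob_space square_integrable_inner[OF R])
  then show ?thesis
    using lin_proj_eqI[OF R Y pd] by simp
qed

end

context prob_space
begin

lemma var_pos_def_subvector:
  assumes Z: "square_integrable M Z" and R: "square_integrable M R" and pd: "var_pos_def M Z"
    and sub: "\<And>s. s \<noteq> 0 \<Longrightarrow> \<exists>t. t \<noteq> 0 \<and> (\<forall>x. s \<bullet> R x = t \<bullet> Z x)"
  shows "var_pos_def M R"
  unfolding var_pos_def_iff[OF R]
proof (intro allI impI)
  fix s :: 'c assume "s \<noteq> 0"
  then obtain t where "t \<noteq> 0" and "\<And>x. s \<bullet> R x = t \<bullet> Z x"
    using sub by blast
  then show "variance (\<lambda>x. s \<bullet> R x) > 0"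
    using pd by (simp add: var_pos_def_iff[OF Z])
qed

lemma var_pos_def_regressors:
  fixes Y X :: "'a \<Rightarrow> real" and W1 :: "'a \<Rightarrow> 'c::euclidean_space" and W2 :: "'a \<Rightarrow> 'd::euclidean_space"
  assumes Y: "square_integrable M Y" and X: "square_integrable M X"
    and W1: "square_integrable M W1" and W2: "square_integrable M W2"
    and pd: "var_pos_def M (\<lambda>x. (Y x, X x, W1 x, W2 x))"
  shows "var_pos_def M (\<lambda>x. (X x, W1 x))" and "var_pos_def M (\<lambda>x. (X x, W1 x, W2 x))"
    and "var_pos_def M (\<lambda>x. (W1 x, W2 x))" and "var_pos_def M W1"
    and "var_pos_def M (\<lambda>x. (Y x, X x, W1 x))"
proof -
  note sub = var_pos_def_subvector[OF _ _ pd]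
  note sq = square_integrable_Pair_iff Y X W1 W2
  show "var_pos_def M (\<lambda>x. (X x, W1 x))"
  proof (rule sub)
    show "\<exists>t. t \<noteq> 0 \<and> (\<forall>x. s \<bullet> (X x, W1 x) = t \<bullet> (Y x, X x, W1 x, W2 x))" if "s \<noteq> 0" for s
      using that by (intro exI[of _ "(0, fst s, snd s, 0)"]) (cases s, simp add: zero_prod_def)
  qed (simp_all add: sq)
  show "var_pos_def M (\<lambda>x. (X x, W1 x, W2 x))"
  proof (rule sub)
    show "\<exists>t. t \<noteq> 0 \<and> (\<forall>x. s \<bullet> (X x, W1 x, W2 x) = t \<bullet> (Y x, X x, W1 x, W2 x))" if "s \<noteq> 0" for s
      using that by (intro exI[of _ "(0, s)"]) (simp add: zero_prod_def)
  qed (simp_all add: sq)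
  show "var_pos_def M (\<lambda>x. (W1 x, W2 x))"
  proof (rule sub)
    show "\<exists>t. t \<noteq> 0 \<and> (\<forall>x. s \<bullet> (W1 x, W2 x) = t \<bullet> (Y x, X x, W1 x, W2 x))" if "s \<noteq> 0" for s
      using that by (intro exI[of _ "(0, 0, s)"]) (simp add: zero_prod_def)
  qed (simp_all add: sq)
  show "var_pos_def M W1"
  proof (rule sub)
    show "\<exists>t. t \<noteq> 0 \<and> (\<forall>x. s \<bullet> W1 x = t \<bullet> (Y x, X x, W1 x, W2 x))" if "s \<noteq> 0" for s
      using that by (intro exI[of _ "(0, 0, s, 0)"]) (simp add: zero_prod_def)
  qed (simp_all add: sq)
  show "var_pos_def M (\<lambda>x. (Y x, X x, W1 x))"
  proof (rule sub)
    show "\<exists>t. t \<noteq> 0 \<and> (\<forall>x. s \<bullet> (Y x, X x, W1 x) = t \<bullet> (Y x, X x, W1 x, W2 x))" if "s \<noteq> 0" for s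
      using that by (intro exI[of _ "(fst s, fst (snd s), snd (snd s), 0)"]) (cases s, auto simp: zero_prod_def)
  qed (simp_all add: sq)
qed

lemma regression_coefficient_partialled_out:
  fixes Y X :: "'a \<Rightarrow> real"
  assumes Y: "square_integrable M Y" and X: "square_integrable M X" and R: "square_integrable M R"
    and orth_Y: "orth_affine M (\<lambda>x. Y x - c - (\<beta>, \<gamma>) \<bullet> (X x, R x)) (\<lambda>x. (X x, R x))"
    and orth_X: "orth_affine M (\<lambda>x. X x - p0 - p \<bullet> R x) R"
  shows "expectation (\<lambda>x. Y x * (X x - p0 - p \<bullet> R x)) = \<beta> * expectation (\<lambda>x. X x * (X x - p0 - p \<bullet> R x))"
proof -
  define e where "e x = Y x - c - (\<beta>, \<gamma>) \<bullet> (X x, R x)" for x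
  define Xt where "Xt x = X x - p0 - p \<bullet> R x" for x
  have e: "square_integrable M e" and Xt: "square_integrable M Xt"
    unfolding e_def Xt_def
    by (intro square_integrable_diff square_integrable_inner square_integrable_PairI
        square_integrable_const Y X R)+
  have "Xt = (\<lambda>x. - p0 + (1, - p) \<bullet> (X x, R x))"
    by (simp add: Xt_def fun_eq_iff)
  then have eXt: "expectation (\<lambda>x. e x * Xt x) = 0"
    unfolding e_def by (simp only:) (rule orth_affine_mult_affine[OF orth_Y])
  have Xt_affine: "expectation (\<lambda>x. Xt x * (c + \<gamma> \<bullet> R x)) = 0"
    unfolding Xt_def by (rule orth_affine_mult_affine[OF orth_X])
  have "Y x * Xt x = e x * Xt x + \<beta> * (X x * Xt x) + Xt x * (c + \<gamma> \<bullet> R x)" for x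
    by (simp add: e_def algebra_simps)
  then show ?thesis
    using e Xt X square_integrable_add[OF square_integrable_const square_integrable_inner[OF R]] eXt Xt_affine
    by (simp add: integrable_mult_square_integrable flip: Xt_def)
qed

lemma partialled_out_cross_moment_pos:
  fixes X :: "'a \<Rightarrow> real"
  assumes X: "square_integrable M X" and R: "square_integrable M R"
    and pd: "var_pos_def M (\<lambda>x. (X x, R x))"
    and orth_X: "orth_affine M (\<lambda>x. X x - p0 - p \<bullet> R x) R"
  shows "expectation (\<lambda>x. X x * (X x - p0 - p \<bullet> R x)) > 0"
proof -
  define Xt where "Xt x = X x - p0 - p \<bullet> R x" for x
  have XR: "square_integrable M (\<lambda>x. (X x, R x))"
    by (intro square_integrable_PairI X R)
  have Xt: "square_integrable M Xt"
    unfolding Xt_def by (intro square_integrable_diff square_integrable_inner square_integrable_const X R)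
  have "0 < variance (\<lambda>x. (1, - p) \<bullet> (X x, R x))"
    using pd[unfolded var_pos_def_iff[OF XR], rule_format, of "(1, - p)"] by (simp add: zero_prod_def)
  also have "\<dots> = variance (\<lambda>x. (1, - p) \<bullet> (X x, R x) + - p0)"
    by (rule variance_add_const[symmetric, OF integrable_square_integrable[OF square_integrable_inner[OF XR]]])
  also have "(\<lambda>x. (1, - p) \<bullet> (X x, R x) + - p0) = Xt"
    by (simp add: Xt_def fun_eq_iff)
  also have "variance Xt \<le> expectation (\<lambda>x. (Xt x)\<^sup>2)"
    using Xt by (simp add: variance_eq integrable_square_integrable square_integrable_real_iff)
  also have "\<dots> = expectation (\<lambda>x. X x * Xt x)"
  proof -
    have "X x * Xt x = (Xt x)\<^sup>2 + Xt x * (p0 + p \<bullet> R x)" for x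
      by (simp add: Xt_def power2_eq_square algebra_simps)
    moreover have "expectation (\<lambda>x. Xt x * (p0 + p \<bullet> R x)) = 0"
      unfolding Xt_def by (rule orth_affine_mult_affine[OF orth_X])
    ultimately show ?thesis
      using Xt square_integrable_add[OF square_integrable_const square_integrable_inner[OF R]]
      by (simp add: integrable_mult_square_integrable square_integrable_real_iff)
  qed
  finally show ?thesis
    by (simp add: Xt_def)
qed

end

lemma beta_long_eq_beta_med:
  fixes M :: "'a measure" and Y X :: "'a \<Rightarrow> real"
    and W1 :: "'a \<Rightarrow> real^'d1" and W2 :: "'a \<Rightarrow> real^'d2"
  assumes P: "prob_space M" and sm: "second_moments M Y X W1 W2"
    and A1: "A1_pd M Y X W1 W2" and pi2: "pi2 M X W1 W2 = 0"
  shows "beta_long M Y X W1 W2 = beta_med M Y X W1"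
proof -
  interpret prob_space M by (fact P)
  have Y: "square_integrable M Y" and X: "square_integrable M X"
    and W1: "square_integrable M W1" and W2: "square_integrable M W2"
    using sm by (simp_all add: second_moments_iff)
  note pd = var_pos_def_regressors[OF Y X W1 W2 A1[unfolded A1_pd_def]]
  obtain c \<beta> \<gamma> where med: "lin_proj M Y (\<lambda>x. (X x, W1 x)) = (c, \<beta>, \<gamma>)"
    by (cases "lin_proj M Y (\<lambda>x. (X x, W1 x))") auto
  obtain cl \<beta>l \<gamma>l gl where long: "lin_proj M Y (\<lambda>x. (X x, W1 x, W2 x)) = (cl, \<beta>l, \<gamma>l, gl)"
    by (cases "lin_proj M Y (\<lambda>x. (X x, W1 x, W2 x))") auto
  obtain p0 p1 where pi: "lin_proj M X (\<lambda>x. (W1 x, W2 x)) = (p0, p1, 0)"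
    using pi2 unfolding pi2_def by (cases "lin_proj M X (\<lambda>x. (W1 x, W2 x))") auto
  have orth_med: "orth_affine M (\<lambda>x. Y x - c - (\<beta>, \<gamma>) \<bullet> (X x, W1 x)) (\<lambda>x. (X x, W1 x))"
    using lin_proj_orth_affine[OF square_integrable_PairI[OF X W1] Y pd(1)] by (simp add: med)
  have orth_long: "orth_affine M (\<lambda>x. Y x - cl - (\<beta>l, \<gamma>l, gl) \<bullet> (X x, W1 x, W2 x))
      (\<lambda>x. (X x, W1 x, W2 x))"
    using lin_proj_orth_affine[OF square_integrable_PairI[OF X square_integrable_PairI[OF W1 W2]] Y pd(2)] by (simp add: long)
  have orth_pi: "orth_affine M (\<lambda>x. X x - p0 - (p1, 0) \<bullet> (W1 x, W2 x)) (\<lambda>x. (W1 x, W2 x))"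
    using lin_proj_orth_affine[OF square_integrable_PairI[OF W1 W2] X pd(3)] by (simp add: pi)
  then have orth_pi1: "orth_affine M (\<lambda>x. X x - p0 - p1 \<bullet> W1 x) W1"
    by (simp add: orth_affine_PairD1)
  have "expectation (\<lambda>x. Y x * (X x - p0 - p1 \<bullet> W1 x)) = \<beta> * expectation (\<lambda>x. X x * (X x - p0 - p1 \<bullet> W1 x))"
    by (rule regression_coefficient_partialled_out[OF Y X W1 orth_med orth_pi1])
  moreover have "expectation (\<lambda>x. Y x * (X x - p0 - p1 \<bullet> W1 x)) = \<beta>l * expectation (\<lambda>x. X x * (X x - p0 - p1 \<bullet> W1 x))"
    using regression_coefficient_partialled_out[OF Y X square_integrable_PairI[OF W1 W2] orth_long orth_pi] by simp
  moreover have "expectation (\<lambda>x. X x * (X x - p0 - p1 \<bullet> W1 x)) > 0"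
    by (rule partialled_out_cross_moment_pos[OF X W1 pd(1) orth_pi1])
  ultimately show ?thesis
    by (simp add: beta_long_def beta_med_def long_proj_def med long)
qed

definition signed_basis :: "'v::euclidean_space \<times> bool \<Rightarrow> 'v" where
  "signed_basis p = (if snd p then fst p else - fst p)"

lemma sum_signed_basis:
  "(\<Sum>p\<in>Basis \<times> UNIV. t \<bullet> signed_basis p) = (0::real)"
  by (simp add: sum.cartesian_product' UNIV_bool signed_basis_def)

lemma sum_signed_basis_products:
  "(\<Sum>p\<in>Basis \<times> UNIV. (t \<bullet> signed_basis p) * (s \<bullet> signed_basis p)) = 2 * (t \<bullet> s)"
proof -
  have "(\<Sum>p\<in>Basis \<times> UNIV. (t \<bullet> signed_basis p) * (s \<bullet> signed_basis p))
      = (\<Sum>b\<in>Basis. 2 * ((t \<bullet> b) * (s \<bullet> b)))"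
    by (simp add: sum.cartesian_product' UNIV_bool signed_basis_def mult.commute)
  also have "\<dots> = 2 * (t \<bullet> s)"
    by (simp add: sum_distrib_left[symmetric] euclidean_inner[of t s])
  finally show ?thesis .
qed

lemma
  fixes F :: "'a \<times> 'b \<Rightarrow> real"
  assumes P: "prob_space M" and S: "finite S" "S \<noteq> {}"
    and F: "F \<in> borel_measurable (M \<Otimes>\<^sub>M measure_pmf (pmf_of_set S))"
    and sections: "\<And>s. s \<in> S \<Longrightarrow> integrable M (\<lambda>x. F (x, s))"
  shows integrable_pair_pmf_of_set: "integrable (M \<Otimes>\<^sub>M measure_pmf (pmf_of_set S)) F"
    and integral_pair_pmf_of_set:
      "integral\<^sup>L (M \<Otimes>\<^sub>M measure_pmf (pmf_of_set S)) F = (\<integral>x. (\<Sum>s\<in>S. F (x, s)) / card S \<partial>M)"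
proof -
  interpret pair_sigma_finite M "measure_pmf (pmf_of_set S)"
    by (intro pair_sigma_finite.intro prob_space_imp_sigma_finite P prob_space_measure_pmf)
  have average: "integral\<^sup>L (measure_pmf (pmf_of_set S)) g = (\<Sum>s\<in>S. g s) / card S" for g :: "'b \<Rightarrow> real"
    by (rule integral_pmf_of_set[OF S(2,1)])
  show I: "integrable (M \<Otimes>\<^sub>M measure_pmf (pmf_of_set S)) F"
  proof (rule Fubini_integrable[OF F])
    show "integrable M (\<lambda>x. \<integral>y. norm (F (x, y)) \<partial>measure_pmf (pmf_of_set S))"
      unfolding average
      by (intro integrable_divide_zero Bochner_Integration.integrable_sum integrable_norm sections)
    show "AE x in M. integrable (measure_pmf (pmf_of_set S)) (\<lambda>y. F (x, y))"
      by (simp add: integrable_measure_pmf_finite S)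
  qed
  show "integral\<^sup>L (M \<Otimes>\<^sub>M measure_pmf (pmf_of_set S)) F = (\<integral>x. (\<Sum>s\<in>S. F (x, s)) / card S \<partial>M)"
    unfolding integral_fst'[OF I, symmetric] average ..
qed

lemma average_signed_basis_products:
  fixes t s :: "'v::euclidean_space"
  shows "(\<Sum>p\<in>Basis \<times> UNIV. (A + \<eta> * (t \<bullet> signed_basis p)) * (B + \<eta> * (s \<bullet> signed_basis p)))
      / card ((Basis :: 'v set) \<times> (UNIV :: bool set))
    = A * B + \<eta>\<^sup>2 * (t \<bullet> s) / DIM('v)"
proof -
  have "(\<Sum>p\<in>Basis \<times> UNIV. (A + \<eta> * (t \<bullet> signed_basis p)) * (B + \<eta> * (s \<bullet> signed_basis p)))
      = (\<Sum>p\<in>Basis \<times> UNIV. A * B + (\<eta> * A) * (s \<bullet> signed_basis p) + (\<eta> * B) * (t \<bullet> signed_basis p)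
          + \<eta>\<^sup>2 * ((t \<bullet> signed_basis p) * (s \<bullet> signed_basis p)))"
    by (intro sum.cong refl) (simp add: power2_eq_square algebra_simps)
  also have "\<dots> = card ((Basis :: 'v set) \<times> (UNIV :: bool set)) * (A * B) + \<eta>\<^sup>2 * (2 * (t \<bullet> s))"
    by (simp add: sum.distrib sum_distrib_left[symmetric] sum_signed_basis sum_signed_basis_products)
  finally show ?thesis
    by (simp add: card_cartesian_product field_simps)
qed

(* The perturbation eta xi, with xi uniform on {+-e_i} and independent of Z, enters only
   through E[xi] = 0 and E[xi xi'] = I / DIM('v). *)
definition perturb_last ::
  "'a measure \<Rightarrow> ('a \<Rightarrow> real \<times> real \<times> 'c::euclidean_space \<times> 'v::euclidean_space) \<Rightarrow> real
    \<Rightarrow> (real \<times> real \<times> 'c \<times> 'v) measure" where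
  "perturb_last M Z \<eta> = distr (M \<Otimes>\<^sub>M measure_pmf (pmf_of_set (Basis \<times> UNIV))) borel
     (\<lambda>(x, p). Z x + (0, 0, 0, \<eta> *\<^sub>R signed_basis p))"

lemma sets_perturb_last: "sets (perturb_last M Z \<eta>) = sets borel"
  by (simp add: perturb_last_def)

lemma measurable_perturbation:
  fixes Z :: "'a \<Rightarrow> real \<times> real \<times> 'c::euclidean_space \<times> 'v::euclidean_space"
  assumes [measurable]: "Z \<in> borel_measurable M"
  shows "(\<lambda>(x, p). Z x + (0, 0, 0, \<eta> *\<^sub>R signed_basis p)) \<in> borel_measurable (M \<Otimes>\<^sub>M measure_pmf Q)"
proof -
  have [measurable]: "(\<lambda>x. signed_basis (snd x) :: 'v) \<in> borel_measurable (M \<Otimes>\<^sub>M measure_pmf Q)"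
    by (rule measurable_compose[OF measurable_snd]) simp
  show ?thesis
    unfolding split_beta' by measurable
qed

context
  fixes M :: "'a measure" and Z :: "'a \<Rightarrow> real \<times> real \<times> 'c::euclidean_space \<times> 'v::euclidean_space"
    and \<eta> :: real
  assumes P: "prob_space M" and Z: "square_integrable M Z"
begin

lemma prob_space_perturb_last: "prob_space (perturb_last M Z \<eta>)"
proof -
  interpret pair_prob_space M "measure_pmf (pmf_of_set (Basis \<times> UNIV))"
    using P by (simp add: pair_prob_space_def pair_sigma_finite_def prob_space_imp_sigma_finite
        prob_space_measure_pmf)
  show ?thesis
    unfolding perturb_last_def
    by (intro prob_space_distr measurable_perturbation) (use Z in \<open>simp add: square_integrable_def\<close>)
qed

lemma distr_perturb_last_init:
  "distr (perturb_last M Z \<eta>) borel (\<lambda>(y, x, w1, w2). (y, x, w1))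
    = distr M borel (\<lambda>\<omega>. case Z \<omega> of (y, x, w1, w2) \<Rightarrow> (y, x, w1))"
proof -
  have [measurable]: "Z \<in> borel_measurable M"
    using Z by (simp add: square_integrable_def)
  let ?Q = "measure_pmf (pmf_of_set ((Basis :: 'v set) \<times> (UNIV :: bool set)))"
  let ?init = "\<lambda>(y, x, w1, w2 :: 'v). (y :: real, x :: real, w1 :: 'c)"
  have [measurable]: "?init \<in> borel_measurable borel"
    unfolding split_beta' by (intro borel_measurable_continuous_onI continuous_intros)
  have "distr (perturb_last M Z \<eta>) borel ?init
      = distr (M \<Otimes>\<^sub>M ?Q) borel (?init \<circ> (\<lambda>(x, p). Z x + (0, 0, 0, \<eta> *\<^sub>R signed_basis p)))"
    unfolding perturb_last_def by (intro distr_distr measurable_perturbation) measurable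
  also have "?init \<circ> (\<lambda>(x, p). Z x + (0, 0, 0, \<eta> *\<^sub>R signed_basis p)) = (\<lambda>\<omega>. ?init (Z \<omega>)) \<circ> fst"
    by (auto simp: fun_eq_iff split_beta')
  also have "distr (M \<Otimes>\<^sub>M ?Q) borel \<dots> = distr (distr (M \<Otimes>\<^sub>M ?Q) M fst) borel (\<lambda>\<omega>. ?init (Z \<omega>))"
    by (rule distr_distr[symmetric]) measurable
  also have "distr (M \<Otimes>\<^sub>M ?Q) M fst = M"
    by (rule prob_space.distr_pair_fst[OF prob_space_measure_pmf])
  finally show ?thesis
    by (simp add: case_prod_beta')
qed

lemma
  shows integrable_perturb_last_affine_products:
      "integrable (perturb_last M Z \<eta>) (\<lambda>z. (a + t \<bullet> z) * (b + s \<bullet> z))"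
    and ExpM_perturb_last_affine_products:
      "ExpM (perturb_last M Z \<eta>) (\<lambda>z. (a + t \<bullet> z) * (b + s \<bullet> z))
        = ExpM M (\<lambda>x. (a + t \<bullet> Z x) * (b + s \<bullet> Z x))
          + \<eta>\<^sup>2 * (snd (snd (snd t)) \<bullet> snd (snd (snd s))) / DIM('v)"
proof -
  let ?S = "(Basis :: 'v set) \<times> (UNIV :: bool set)"
  let ?f = "\<lambda>(x, p). Z x + (0, 0, 0, \<eta> *\<^sub>R signed_basis p)"
  let ?t4 = "snd (snd (snd t))" and ?s4 = "snd (snd (snd s))"
  define G where "G z = (a + t \<bullet> z) * (b + s \<bullet> z)" for z
  interpret prob_space M by (fact P)
  have [measurable]: "Z \<in> borel_measurable M"
    using Z by (simp add: square_integrable_def)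
  have [measurable]: "G \<in> borel_measurable borel"
    unfolding G_def by measurable
  have f: "?f \<in> borel_measurable (M \<Otimes>\<^sub>M measure_pmf (pmf_of_set ?S))"
    by (rule measurable_perturbation) measurable
  have G_f: "G (?f (x, p)) = (a + t \<bullet> Z x + \<eta> * (?t4 \<bullet> signed_basis p)) * (b + s \<bullet> Z x + \<eta> * (?s4 \<bullet> signed_basis p))"
    for x p
    by (cases t, cases s) (simp add: G_def inner_add_right algebra_simps)
  have sections: "integrable M (\<lambda>x. G (?f (x, p)))" for p
    unfolding G_f
    by (intro integrable_mult_square_integrable square_integrable_add square_integrable_inner Z square_integrable_const)
  have GfM: "(\<lambda>x. G (?f x)) \<in> borel_measurable (M \<Otimes>\<^sub>M measure_pmf (pmf_of_set ?S))"
    using f by measurable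
  note pair = integrable_pair_pmf_of_set[OF P _ _ GfM sections] integral_pair_pmf_of_set[OF P _ _ GfM sections]
  show "integrable (perturb_last M Z \<eta>) (\<lambda>z. (a + t \<bullet> z) * (b + s \<bullet> z))"
    unfolding perturb_last_def G_def[symmetric]
    by (subst integrable_distr_eq) (use pair(1) f in \<open>auto simp: comp_def\<close>)
  have average: "(\<Sum>p\<in>?S. G (?f (x, p))) / card ?S
      = (a + t \<bullet> Z x) * (b + s \<bullet> Z x) + \<eta>\<^sup>2 * (?t4 \<bullet> ?s4) / DIM('v)" for x
    unfolding G_f by (rule average_signed_basis_products)
  have "ExpM (perturb_last M Z \<eta>) G = expectation (\<lambda>x. (\<Sum>p\<in>?S. G (?f (x, p))) / card ?S)"
    unfolding perturb_last_def ExpM_def by (subst integral_distr) (use pair(2) f in auto)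
  also have "\<dots> = expectation (\<lambda>x. (a + t \<bullet> Z x) * (b + s \<bullet> Z x)) + \<eta>\<^sup>2 * (?t4 \<bullet> ?s4) / DIM('v)"
    unfolding average using sections[of undefined]
    by (simp add: integrable_mult_square_integrable square_integrable_add square_integrable_inner Z
        square_integrable_const prob_space)
  finally show "ExpM (perturb_last M Z \<eta>) (\<lambda>z. (a + t \<bullet> z) * (b + s \<bullet> z))
      = ExpM M (\<lambda>x. (a + t \<bullet> Z x) * (b + s \<bullet> Z x)) + \<eta>\<^sup>2 * (?t4 \<bullet> ?s4) / DIM('v)"
    by (simp add: G_def[abs_def] ExpM_def)
qed

lemma square_integrable_perturb_last: "square_integrable (perturb_last M Z \<eta>) (\<lambda>z. z)"
proof (rule square_integrable_BasisI)
  show "(\<lambda>z. z) \<in> borel_measurable (perturb_last M Z \<eta>)"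
    by (simp add: measurable_cong_sets[OF sets_perturb_last refl])
  show "integrable (perturb_last M Z \<eta>) (\<lambda>z. (z \<bullet> i)\<^sup>2)" for i
    using integrable_perturb_last_affine_products[of 0 i 0 i]
    by (simp add: power2_eq_square inner_commute)
qed

lemma variance_perturb_last:
  "prob_space.variance (perturb_last M Z \<eta>) (\<lambda>z. t \<bullet> z)
    = prob_space.variance M (\<lambda>x. t \<bullet> Z x) + \<eta>\<^sup>2 * (snd (snd (snd t)) \<bullet> snd (snd (snd t))) / DIM('v)"
proof -
  define m where "m = ExpM M (\<lambda>x. t \<bullet> Z x)"
  have mean: "ExpM (perturb_last M Z \<eta>) (\<lambda>z. t \<bullet> z) = m"
    using ExpM_perturb_last_affine_products[of 0 t 1 0] by (simp add: m_def)
  have "prob_space.variance (perturb_last M Z \<eta>) (\<lambda>z. t \<bullet> z)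
      = ExpM (perturb_last M Z \<eta>) (\<lambda>z. (- m + t \<bullet> z) * (- m + t \<bullet> z))"
    using mean by (simp add: ExpM_def power2_eq_square algebra_simps)
  also have "\<dots> = ExpM M (\<lambda>x. (t \<bullet> Z x - m)\<^sup>2) + \<eta>\<^sup>2 * (snd (snd (snd t)) \<bullet> snd (snd (snd t))) / DIM('v)"
    by (subst ExpM_perturb_last_affine_products) (simp add: power2_eq_square algebra_simps)
  finally show ?thesis
    by (simp add: ExpM_def m_def)
qed

lemma var_pos_def_perturb_last:
  assumes "\<eta> \<noteq> 0"
    and pd: "\<And>t. t \<noteq> 0 \<Longrightarrow> snd (snd (snd t)) = 0 \<Longrightarrow> prob_space.variance M (\<lambda>x. t \<bullet> Z x) > 0"
  shows "var_pos_def (perturb_last M Z \<eta>) (\<lambda>z. z)"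
proof (rule prob_space.var_pos_def_iff[THEN iffD2, OF prob_space_perturb_last square_integrable_perturb_last],
    intro allI impI)
  fix t :: "real \<times> real \<times> 'c \<times> 'v" assume "t \<noteq> 0"
  have "prob_space.variance M (\<lambda>x. t \<bullet> Z x) \<ge> 0"
    by (rule prob_space.variance_positive[OF P])
  moreover have "\<eta>\<^sup>2 * (snd (snd (snd t)) \<bullet> snd (snd (snd t))) / DIM('v) > 0" if "snd (snd (snd t)) \<noteq> 0"
    using that \<open>\<eta> \<noteq> 0\<close> by simp
  ultimately show "prob_space.variance (perturb_last M Z \<eta>) (\<lambda>z. t \<bullet> z) > 0"
    unfolding variance_perturb_last using pd[OF \<open>t \<noteq> 0\<close>]
    by (cases "snd (snd (snd t)) = 0") (simp_all add: add_nonneg_pos)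
qed

lemma orth_affine_perturb_lastI:
  assumes R: "\<And>t z. t \<bullet> R z = L t \<bullet> z"
    and orth: "\<And>a t. ExpM M (\<lambda>x. (a0 + T \<bullet> Z x) * (a + L t \<bullet> Z x))
      + \<eta>\<^sup>2 * (snd (snd (snd T)) \<bullet> snd (snd (snd (L t)))) / DIM('v) = 0"
  shows "orth_affine (perturb_last M Z \<eta>) (\<lambda>z. a0 + T \<bullet> z) R"
  unfolding orth_affine_def R
  using orth by (simp add: ExpM_perturb_last_affine_products)

end

lemma square_integrable_coordinates:
  fixes M :: "('a::euclidean_space \<times> 'b::euclidean_space \<times> 'c::euclidean_space \<times> 'd::euclidean_space) measure"
  assumes "square_integrable M (\<lambda>z. z)"
  shows "square_integrable M fst" and "square_integrable M (\<lambda>z. fst (snd z))"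
    and "square_integrable M (\<lambda>z. fst (snd (snd z)))" and "square_integrable M (\<lambda>z. snd (snd (snd z)))"
proof -
  have "square_integrable M (\<lambda>z. (fst z, fst (snd z), fst (snd (snd z)), snd (snd (snd z))))"
    using assms by simp
  then show "square_integrable M fst" and "square_integrable M (\<lambda>z. fst (snd z))"
    and "square_integrable M (\<lambda>z. fst (snd (snd z)))" and "square_integrable M (\<lambda>z. snd (snd (snd z)))"
    unfolding square_integrable_Pair_iff by auto
qed

lemma second_moments_coordinates:
  assumes "square_integrable N (\<lambda>z :: real \<times> real \<times> (real^'d1) \<times> (real^'d2). z)"
  shows "second_moments N (\<lambda>(y, x, w1, w2). y) (\<lambda>(y, x, w1, w2). x) (\<lambda>(y, x, w1, w2). w1) (\<lambda>(y, x, w1, w2). w2)"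
  using square_integrable_coordinates[OF assms] by (simp add: second_moments_iff split_beta')

lemma var_pos_def_coordinates:
  fixes M :: "(real \<times> real \<times> 'c::euclidean_space \<times> 'v::euclidean_space) measure"
  assumes P: "prob_space M" and sq: "square_integrable M (\<lambda>z. z)" and pd: "var_pos_def M (\<lambda>z. z)"
  shows "var_pos_def M snd" and "var_pos_def M (\<lambda>z. snd (snd z))"
  using prob_space.var_pos_def_regressors(2,3)[OF P square_integrable_coordinates[OF sq]] pd
  by simp_all

context
  fixes M :: "'a measure" and Y X :: "'a \<Rightarrow> real" and W1 :: "'a \<Rightarrow> real^'d1"
    and u :: "'a \<Rightarrow> real" and c \<beta> :: real and \<gamma> g :: "real^'d1"
    and e :: "real^'d2" and \<eta> :: real and Z :: "'a \<Rightarrow> real \<times> real \<times> (real^'d1) \<times> (real^'d2)"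
  assumes P: "prob_space M"
    and Y: "square_integrable M Y" and X: "square_integrable M X" and W1: "square_integrable M W1"
    and u_def: "u = (\<lambda>x. Y x - c - (\<beta>, \<gamma>) \<bullet> (X x, W1 x))"
    and orth_u: "orth_affine M u (\<lambda>x. (X x, W1 x))"
    and e: "e \<in> Basis"
    and \<eta>: "\<eta>\<^sup>2 = DIM(real^'d2) * ExpM M (\<lambda>x. (u x)\<^sup>2) / 4"
    and Z_def: "Z = (\<lambda>x. (Y x, X x, W1 x, (u x / 2 + (\<gamma> - g) \<bullet> W1 x) *\<^sub>R e))"
    and pd: "var_pos_def M (\<lambda>x. (Y x, X x, W1 x))"
begin

lemma square_integrable_residual: "square_integrable M u"
proof -
  interpret prob_space M by (fact P)
  show ?thesis
    unfolding u_def
    by (intro square_integrable_diff square_integrable_inner square_integrable_PairI square_integrable_const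
        X Y W1)
qed

lemma square_integrable_construction: "square_integrable M Z"
  unfolding Z_def
  by (intro square_integrable_PairI square_integrable_scaleR_left square_integrable_add
      square_integrable_mult_left[of _ _ "1/2", simplified] square_integrable_inner
      square_integrable_residual X Y W1)

lemma orth_affine_long_perturbed:
  "orth_affine (perturb_last M Z \<eta>) (\<lambda>z. - c + (1, - \<beta>, - g, - e) \<bullet> z) snd"
proof (rule orth_affine_perturb_lastI[OF P square_integrable_construction, where L = "Pair 0"])
  show "t \<bullet> snd z = (0, t) \<bullet> z" for t and z :: "real \<times> real \<times> (real^'d1) \<times> (real^'d2)"
    by (simp add: inner_prod_def)
  interpret prob_space M by (fact P)
  fix a and t :: "real \<times> (real^'d1) \<times> (real^'d2)"
  obtain t1 t2 t3 where t: "t = (t1, t2, t3)"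
    by (cases t) auto
  have half_residual: "- c + (1, - \<beta>, - g, - e) \<bullet> Z x = u x / 2" for x
    using e by (simp add: Z_def u_def inner_diff_left algebra_simps) (simp add: field_simps)
  have "u x / 2 * (a + (0, t) \<bullet> Z x)
      = 1/2 * (u x * (a + (t1, t2 + (t3 \<bullet> e) *\<^sub>R (\<gamma> - g)) \<bullet> (X x, W1 x))) + (t3 \<bullet> e) / 4 * (u x)\<^sup>2" for x
    by (simp add: t Z_def inner_add_left power2_eq_square algebra_simps)
  moreover have "ExpM M (\<lambda>x. u x * (a + (t1, t2 + (t3 \<bullet> e) *\<^sub>R (\<gamma> - g)) \<bullet> (X x, W1 x))) = 0"
    using orth_u by (simp add: orth_affine_def)
  moreover have "integrable M (\<lambda>x. u x * (a + (t1, t2 + (t3 \<bullet> e) *\<^sub>R (\<gamma> - g)) \<bullet> (X x, W1 x)))"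
    by (intro integrable_mult_square_integrable square_integrable_residual square_integrable_add
        square_integrable_const square_integrable_inner square_integrable_PairI X W1)
  moreover have "integrable M (\<lambda>x. (u x)\<^sup>2)"
    using square_integrable_residual by (simp add: square_integrable_real_iff)
  ultimately have "ExpM M (\<lambda>x. (- c + (1, - \<beta>, - g, - e) \<bullet> Z x) * (a + (0, t) \<bullet> Z x))
      = (t3 \<bullet> e) / 4 * ExpM M (\<lambda>x. (u x)\<^sup>2)"
    unfolding half_residual by (simp add: ExpM_def)
  then show "ExpM M (\<lambda>x. (- c + (1, - \<beta>, - g, - e) \<bullet> Z x) * (a + (0, t) \<bullet> Z x))
      + \<eta>\<^sup>2 * (snd (snd (snd (1, - \<beta>, - g, - e))) \<bullet> snd (snd (snd (0, t)))) / DIM(real^'d2) = 0"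
    by (simp add: \<eta> t inner_commute)
qed

lemma orth_affine_partialled_out_perturbed:
  assumes orth_X: "orth_affine M (\<lambda>x. X x - q0 - q \<bullet> W1 x) W1"
  shows "orth_affine (perturb_last M Z \<eta>) (\<lambda>z. - q0 + (0, 1, - q, 0) \<bullet> z) (\<lambda>z. snd (snd z))"
proof (rule orth_affine_perturb_lastI[OF P square_integrable_construction, where L = "\<lambda>t. (0, 0, t)"])
  show "t \<bullet> snd (snd z) = (0, 0, t) \<bullet> z" for t and z :: "real \<times> real \<times> (real^'d1) \<times> (real^'d2)"
    by (simp add: inner_prod_def)
  interpret prob_space M by (fact P)
  fix a and t :: "(real^'d1) \<times> (real^'d2)"
  obtain t1 t2 where t: "t = (t1, t2)"
    by (cases t) auto
  define Xt where "Xt x = X x - q0 - q \<bullet> W1 x" for x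
  have Xt: "square_integrable M Xt"
    unfolding Xt_def
    by (intro square_integrable_diff square_integrable_inner square_integrable_const X W1)
  have "Xt x * (a + (0, 0, t) \<bullet> Z x)
      = Xt x * (a + (t1 + (t2 \<bullet> e) *\<^sub>R (\<gamma> - g)) \<bullet> W1 x) + (t2 \<bullet> e) / 2 * (u x * Xt x)" for x
    by (simp add: t Z_def inner_add_left algebra_simps)
  moreover have "expectation (\<lambda>x. Xt x * (a + (t1 + (t2 \<bullet> e) *\<^sub>R (\<gamma> - g)) \<bullet> W1 x)) = 0"
    using orth_X by (simp add: orth_affine_def ExpM_def Xt_def)
  moreover have "expectation (\<lambda>x. u x * Xt x) = 0"
  proof -
    have "Xt = (\<lambda>x. - q0 + (1, - q) \<bullet> (X x, W1 x))"
      by (simp add: Xt_def fun_eq_iff)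
    then show ?thesis
      using orth_u unfolding orth_affine_def ExpM_def by (simp only:)
  qed
  moreover have "integrable M (\<lambda>x. Xt x * (a + (t1 + (t2 \<bullet> e) *\<^sub>R (\<gamma> - g)) \<bullet> W1 x))"
    by (intro integrable_mult_square_integrable Xt square_integrable_add square_integrable_const
        square_integrable_inner W1)
  moreover have "integrable M (\<lambda>x. u x * Xt x)"
    by (intro integrable_mult_square_integrable Xt square_integrable_residual)
  ultimately have "ExpM M (\<lambda>x. Xt x * (a + (0, 0, t) \<bullet> Z x)) = 0"
    by (simp add: ExpM_def)
  moreover have "- q0 + (0, 1, - q, 0) \<bullet> Z x = Xt x" for x
    by (simp add: Z_def Xt_def)
  ultimately show "ExpM M (\<lambda>x. (- q0 + (0, 1, - q, 0) \<bullet> Z x) * (a + (0, 0, t) \<bullet> Z x))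
      + \<eta>\<^sup>2 * (snd (snd (snd (0::real, 1::real, - q, 0::real^'d2))) \<bullet> snd (snd (snd (0::real, 0::real, t)))) / DIM(real^'d2) = 0"
    by simp
qed

lemma perturbation_nonzero: "\<eta> \<noteq> 0"
proof -
  interpret prob_space M by (fact P)
  have YXW1: "square_integrable M (\<lambda>x. (Y x, X x, W1 x))"
    by (intro square_integrable_PairI Y X W1)
  have "0 < variance (\<lambda>x. (1, - \<beta>, - \<gamma>) \<bullet> (Y x, X x, W1 x))"
    using pd[unfolded var_pos_def_iff[OF YXW1], rule_format, of "(1, - \<beta>, - \<gamma>)"]
    by (simp add: zero_prod_def)
  also have "\<dots> = variance (\<lambda>x. (1, - \<beta>, - \<gamma>) \<bullet> (Y x, X x, W1 x) + - c)"
    by (rule variance_add_const[symmetric, OF integrable_square_integrable[OF square_integrable_inner[OF YXW1]]])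
  also have "(\<lambda>x. (1, - \<beta>, - \<gamma>) \<bullet> (Y x, X x, W1 x) + - c) = u"
    by (simp add: u_def fun_eq_iff)
  also have "variance u \<le> expectation (\<lambda>x. (u x)\<^sup>2)"
    using square_integrable_residual
    by (simp add: variance_eq integrable_square_integrable square_integrable_real_iff)
  finally show ?thesis
    using \<eta> by (auto simp: ExpM_def)
qed

lemma var_pos_def_perturbed: "var_pos_def (perturb_last M Z \<eta>) (\<lambda>z. z)"
proof (rule var_pos_def_perturb_last[OF P square_integrable_construction perturbation_nonzero])
  interpret prob_space M by (fact P)
  fix t :: "real \<times> real \<times> (real^'d1) \<times> (real^'d2)"
  assume "t \<noteq> 0" and "snd (snd (snd t)) = 0"
  then obtain t' where "t' \<noteq> 0" and t: "t = (fst t', fst (snd t'), snd (snd t'), 0)"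
    by (intro that[of "(fst t, fst (snd t), fst (snd (snd t)))"]) (auto simp: prod_eq_iff)
  then show "variance (\<lambda>x. t \<bullet> Z x) > 0"
    using pd[unfolded var_pos_def_iff[OF square_integrable_PairI[OF Y square_integrable_PairI[OF X W1]]]]
    by (simp add: Z_def t inner_prod_def split_beta')
qed

lemma lin_proj_long_perturbed:
  "lin_proj (perturb_last M Z \<eta>) (\<lambda>(y, x, w1, w2). y) (\<lambda>(y, x, w1, w2). (x, w1, w2)) = (c, \<beta>, g, e)"
proof -
  note N = prob_space_perturb_last[OF P square_integrable_construction, of \<eta>]
    square_integrable_perturb_last[OF P square_integrable_construction, of \<eta>]
  have "lin_proj (perturb_last M Z \<eta>) fst snd = (c, \<beta>, g, e)"
  proof (rule prob_space.lin_proj_eqI[OF N(1)])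
    show "square_integrable (perturb_last M Z \<eta>) snd" "square_integrable (perturb_last M Z \<eta>) fst"
      using square_integrable_Pair_iff[of "perturb_last M Z \<eta>" fst snd] N(2) by simp_all
    show "var_pos_def (perturb_last M Z \<eta>) snd"
      by (rule var_pos_def_coordinates(1)[OF N var_pos_def_perturbed])
    have residual: "(\<lambda>z. fst z - c - (\<beta>, g, e) \<bullet> snd z) = (\<lambda>z. - c + (1, - \<beta>, - g, - e) \<bullet> z)"
      by (simp add: fun_eq_iff inner_prod_def split_beta')
    show "orth_affine (perturb_last M Z \<eta>) (\<lambda>z. fst z - c - (\<beta>, g, e) \<bullet> snd z) snd"
      unfolding residual by (rule orth_affine_long_perturbed)
  qed
  then show ?thesis
    by (simp add: split_beta' flip: fst_def snd_def)
qed

lemma lin_proj_partialled_out_perturbed: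
  assumes orth_X: "orth_affine M (\<lambda>x. X x - q0 - q \<bullet> W1 x) W1"
  shows "lin_proj (perturb_last M Z \<eta>) (\<lambda>(y, x, w1, w2). x) (\<lambda>(y, x, w1, w2). (w1, w2)) = (q0, q, 0)"
proof -
  note N = prob_space_perturb_last[OF P square_integrable_construction, of \<eta>]
    square_integrable_perturb_last[OF P square_integrable_construction, of \<eta>]
  have "lin_proj (perturb_last M Z \<eta>) (\<lambda>z. fst (snd z)) (\<lambda>z. snd (snd z)) = (q0, q, 0)"
  proof (rule prob_space.lin_proj_eqI[OF N(1)])
    show "square_integrable (perturb_last M Z \<eta>) (\<lambda>z. snd (snd z))"
      "square_integrable (perturb_last M Z \<eta>) (\<lambda>z. fst (snd z))"
      using square_integrable_coordinates[OF N(2)]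
        square_integrable_Pair_iff[of "perturb_last M Z \<eta>" "\<lambda>z. fst (snd (snd z))" "\<lambda>z. snd (snd (snd z))"]
      by simp_all
    show "var_pos_def (perturb_last M Z \<eta>) (\<lambda>z. snd (snd z))"
      by (rule var_pos_def_coordinates(2)[OF N var_pos_def_perturbed])
    have residual: "(\<lambda>z. fst (snd z) - q0 - (q, 0) \<bullet> snd (snd z)) = (\<lambda>z. - q0 + (0, 1, - q, 0) \<bullet> z)"
      by (simp add: fun_eq_iff inner_prod_def split_beta')
    show "orth_affine (perturb_last M Z \<eta>) (\<lambda>z. fst (snd z) - q0 - (q, 0) \<bullet> snd (snd z)) (\<lambda>z. snd (snd z))"
      unfolding residual by (rule orth_affine_partialled_out_perturbed[OF orth_X])
  qed
  then show ?thesis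
    by (simp add: split_beta')
qed

lemma perturbed_model:
  assumes orth_X: "orth_affine M (\<lambda>x. X x - q0 - q \<bullet> W1 x) W1"
  defines "N \<equiv> perturb_last M Z \<eta>"
  shows "prob_space N \<and> sets N = sets borel
       \<and> distr N borel (\<lambda>(y, x, w1, w2). (y, x, w1)) = distr M borel (\<lambda>\<omega>. (Y \<omega>, X \<omega>, W1 \<omega>))
       \<and> second_moments N (\<lambda>(y, x, w1, w2). y) (\<lambda>(y, x, w1, w2). x) (\<lambda>(y, x, w1, w2). w1) (\<lambda>(y, x, w1, w2). w2)
       \<and> A1_pd N (\<lambda>(y, x, w1, w2). y) (\<lambda>(y, x, w1, w2). x) (\<lambda>(y, x, w1, w2). w1) (\<lambda>(y, x, w1, w2). w2)
       \<and> pi2 N (\<lambda>(y, x, w1, w2). x) (\<lambda>(y, x, w1, w2). w1) (\<lambda>(y, x, w1, w2). w2) = 0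
       \<and> gamma1 N (\<lambda>(y, x, w1, w2). y) (\<lambda>(y, x, w1, w2). x) (\<lambda>(y, x, w1, w2). w1) (\<lambda>(y, x, w1, w2). w2) = g"
proof (intro conjI)
  note Z = square_integrable_construction
  show "prob_space N"
    unfolding N_def by (rule prob_space_perturb_last[OF P Z])
  show "sets N = sets borel"
    by (simp add: N_def sets_perturb_last)
  show "distr N borel (\<lambda>(y, x, w1, w2). (y, x, w1)) = distr M borel (\<lambda>\<omega>. (Y \<omega>, X \<omega>, W1 \<omega>))"
    using distr_perturb_last_init[OF P Z] by (simp add: N_def Z_def)
  show "second_moments N (\<lambda>(y, x, w1, w2). y) (\<lambda>(y, x, w1, w2). x) (\<lambda>(y, x, w1, w2). w1) (\<lambda>(y, x, w1, w2). w2)"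
    unfolding N_def by (rule second_moments_coordinates[OF square_integrable_perturb_last[OF P Z]])
  show "A1_pd N (\<lambda>(y, x, w1, w2). y) (\<lambda>(y, x, w1, w2). x) (\<lambda>(y, x, w1, w2). w1) (\<lambda>(y, x, w1, w2). w2)"
    using var_pos_def_perturbed by (simp add: A1_pd_def N_def split_beta')
  show "pi2 N (\<lambda>(y, x, w1, w2). x) (\<lambda>(y, x, w1, w2). w1) (\<lambda>(y, x, w1, w2). w2) = 0"
    using lin_proj_partialled_out_perturbed[OF orth_X] by (simp add: pi2_def N_def split_beta')
  show "gamma1 N (\<lambda>(y, x, w1, w2). y) (\<lambda>(y, x, w1, w2). x) (\<lambda>(y, x, w1, w2). w1) (\<lambda>(y, x, w1, w2). w2) = g"
    using lin_proj_long_perturbed by (simp add: gamma1_def long_proj_def N_def split_beta')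
qed

end

lemma gamma1_unidentified:
  fixes M :: "'a measure" and Y X :: "'a \<Rightarrow> real"
    and W1 :: "'a \<Rightarrow> real^'d1" and W2 :: "'a \<Rightarrow> real^'d2" and g1 :: "real^'d1"
  assumes P: "prob_space M" and sm: "second_moments M Y X W1 W2" and A1: "A1_pd M Y X W1 W2"
  shows "\<exists>N :: (real \<times> real \<times> (real^'d1) \<times> (real^'d2)) measure.
         prob_space N \<and> sets N = sets borel
       \<and> distr N borel (\<lambda>(y, x, w1, w2). (y, x, w1)) = distr M borel (\<lambda>\<omega>. (Y \<omega>, X \<omega>, W1 \<omega>))
       \<and> second_moments N (\<lambda>(y, x, w1, w2). y) (\<lambda>(y, x, w1, w2). x) (\<lambda>(y, x, w1, w2). w1) (\<lambda>(y, x, w1, w2). w2)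
       \<and> A1_pd N (\<lambda>(y, x, w1, w2). y) (\<lambda>(y, x, w1, w2). x) (\<lambda>(y, x, w1, w2). w1) (\<lambda>(y, x, w1, w2). w2)
       \<and> pi2 N (\<lambda>(y, x, w1, w2). x) (\<lambda>(y, x, w1, w2). w1) (\<lambda>(y, x, w1, w2). w2) = 0
       \<and> gamma1 N (\<lambda>(y, x, w1, w2). y) (\<lambda>(y, x, w1, w2). x) (\<lambda>(y, x, w1, w2). w1) (\<lambda>(y, x, w1, w2). w2) = g1"
proof -
  interpret prob_space M by (fact P)
  have Y: "square_integrable M Y" and X: "square_integrable M X"
    and W1: "square_integrable M W1" and W2: "square_integrable M W2"
    using sm by (simp_all add: second_moments_iff)
  note pd = var_pos_def_regressors[OF Y X W1 W2 A1[unfolded A1_pd_def]]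
  obtain c \<beta> \<gamma> where med: "lin_proj M Y (\<lambda>x. (X x, W1 x)) = (c, \<beta>, \<gamma>)"
    by (cases "lin_proj M Y (\<lambda>x. (X x, W1 x))") auto
  define u where "u = (\<lambda>x. Y x - c - (\<beta>, \<gamma>) \<bullet> (X x, W1 x))"
  have orth_u: "orth_affine M u (\<lambda>x. (X x, W1 x))"
    using lin_proj_orth_affine[OF square_integrable_PairI[OF X W1] Y pd(1)] by (simp add: med u_def)
  obtain q0 q where pi: "lin_proj M X W1 = (q0, q)"
    by (cases "lin_proj M X W1") auto
  have orth_X: "orth_affine M (\<lambda>x. X x - q0 - q \<bullet> W1 x) W1"
    using lin_proj_orth_affine[OF W1 X pd(4)] by (simp add: pi)
  obtain e :: "real^'d2" where e: "e \<in> Basis"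
    using nonempty_Basis by blast
  define \<eta> where "\<eta> = sqrt (DIM(real^'d2) * ExpM M (\<lambda>x. (u x)\<^sup>2) / 4)"
  have \<eta>2: "\<eta>\<^sup>2 = DIM(real^'d2) * ExpM M (\<lambda>x. (u x)\<^sup>2) / 4"
    by (simp add: \<eta>_def ExpM_def)
  define Z where "Z = (\<lambda>x. (Y x, X x, W1 x, (u x / 2 + (\<gamma> - g1) \<bullet> W1 x) *\<^sub>R e))"
  show ?thesis
    using perturbed_model[OF P Y X W1 u_def orth_u e \<eta>2 Z_def pd(5) orth_X] by blast
qed

theorem mainTheorem5:
  fixes M :: "'a measure"
    and Y X :: "'a \<Rightarrow> real"
    and W1 :: "'a \<Rightarrow> real^'d1"
    and W2 :: "'a \<Rightarrow> real^'d2"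
  assumes "prob_space M"
    and "second_moments M Y X W1 W2"
    and "A1_pd M Y X W1 W2"
    and "pi2 M X W1 W2 = 0"
  shows "beta_long M Y X W1 W2 = beta_med M Y X W1
    \<and> (\<forall>g1 :: (real^'d1). \<exists>(N :: (real \<times> real \<times> (real^'d1) \<times> (real^'d2)) measure).
         prob_space N \<and> sets N = sets borel
       \<and> distr N borel (\<lambda>(y, x, w1, w2). (y, x, w1)) = distr M borel (\<lambda>\<omega>. (Y \<omega>, X \<omega>, W1 \<omega>))
       \<and> second_moments N (\<lambda>(y, x, w1, w2). y) (\<lambda>(y, x, w1, w2). x) (\<lambda>(y, x, w1, w2). w1) (\<lambda>(y, x, w1, w2). w2)
       \<and> A1_pd N (\<lambda>(y, x, w1, w2). y) (\<lambda>(y, x, w1, w2). x) (\<lambda>(y, x, w1, w2). w1) (\<lambda>(y, x, w1, w2). w2)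
       \<and> pi2 N (\<lambda>(y, x, w1, w2). x) (\<lambda>(y, x, w1, w2). w1) (\<lambda>(y, x, w1, w2). w2) = 0
       \<and> gamma1 N (\<lambda>(y, x, w1, w2). y) (\<lambda>(y, x, w1, w2). x) (\<lambda>(y, x, w1, w2). w1) (\<lambda>(y, x, w1, w2). w2) = g1)"
  using beta_long_eq_beta_med[OF assms] gamma1_unidentified[OF assms(1-3)] by blast

end
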